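(* Let $\boldsymbol{\mathcal{A}}\in\mathbb{C}^{N\times N\times M\times M}$ and $\mathbf{v},\mathbf{w}\in\mathbb{C}^N$ with $\mathbf{w}^H\mathbf{v}=1$, and run the tensor non-Hermitian Lanczos process (see context) with arbitrary nonsingular choices $\boldsymbol{\gamma}_2,\boldsymbol{\gamma}_3,\dots$. Let $n\ge1$ and suppose $\boldsymbol{\beta}_2,\dots,\boldsymbol{\beta}_n$ are all nonsingular, so that $\boldsymbol{\alpha}_1,\dots,\boldsymbol{\alpha}_n$, $\boldsymbol{\beta}_2,\dots,\boldsymbol{\beta}_n$, $\boldsymbol{\gamma}_2,\dots,\boldsymbol{\gamma}_n$ and hence $\boldsymbol{\mathcal{T}}_n$ are defined. Let $E_1=\mathbf{e}_1\otimes I_M\in\mathbb{C}^{n\times M\times M}$ and $E_1^D=\mathbf{e}_1\otimes I_M$, where $\mathbf{e}_1$ is the first canonical basis vector of $\mathbb{C}^n$. Then $$W^D*\boldsymbol{\mathcal{A}}^{k_*}*V=E_1^D*(\boldsymbol{\mathcal{T}}_n)^{k_*}*E_1\quad\text{for }k=0,1,\dots,2n-1.$$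
   Context: Slicing and products: for a 4-mode tensor, $\boldsymbol{\mathcal{A}}_{i_1,i_2,:,:}$ denotes the $M\times M$ matrix slice; for a 3-mode tensor, $A_{i,:,:}$ likewise. $*$-tensor product: $(\boldsymbol{\mathcal{A}}*\boldsymbol{\mathcal{B}})_{i_1,i_2,:,:}=\sum_k\boldsymbol{\mathcal{A}}_{i_1,k,:,:}\boldsymbol{\mathcal{B}}_{k,i_2,:,:}$. Tensor-hypervector product: $(\boldsymbol{\mathcal{A}}*A)_{i,:,:}=\sum_k\boldsymbol{\mathcal{A}}_{i,k,:,:}A_{k,:,:}$; left action of a 3-mode tensor $B^D$ (superscript $D$ marks tensors acting from the left): $(B^D*\boldsymbol{\mathcal{A}})^D_{i,:,:}=\sum_k B^D_{k,:,:}\boldsymbol{\mathcal{A}}_{k,i,:,:}$; hypervector inner product $B^D*A=\sum_kB^D_{k,:,:}A_{k,:,:}\in\mathbb{C}^{M\times M}$. These products are associative. For $\boldsymbol{\alpha}\in\mathbb{C}^{M\times M}$ and a 3-mode tensor $A$: $(A\times\boldsymbol{\alpha})_{i,:,:}=A_{i,:,:}\boldsymbol{\alpha}$, $(\boldsymbol{\alpha}\times A)_{i,:,:}=\boldsymbol{\alpha}A_{i,:,:}$. For $\mathbf{a}\in\mathbb{C}^N$, $\mathbf{a}\otimes I_M\in\mathbb{C}^{N\times M\times M}$ has slices $(\mathbf{a}\otimes I_M)_{i,:,:}=\mathbf{a}_iI_M$. The $*$-identity $\boldsymbol{\mathcal{I}}_*$ (of the appropriate size) has slices $I_M$ when $i_1=i_2$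 and $0$ otherwise; $\boldsymbol{\mathcal{A}}^{0_*}=\boldsymbol{\mathcal{I}}_*$ and $\boldsymbol{\mathcal{A}}^{k_*}$ is the $k$-fold $*$-product of $\boldsymbol{\mathcal{A}}$ with itself. Tensor non-Hermitian Lanczos process: set $V=\mathbf{v}\otimes I_M$, $W^D=\overline{\mathbf{w}}\otimes I_M$, $V_0=W_0^D=0$, $\boldsymbol{\beta}_1=0$, $V_1=V$, $W_1^D=W^D$. For $k=1,2,\dots$: $\boldsymbol{\alpha}_k=W_k^D*\boldsymbol{\mathcal{A}}*V_k$; $\widehat W_{k+1}^D=W_k^D*\boldsymbol{\mathcal{A}}-\boldsymbol{\alpha}_k\times W_k^D-\boldsymbol{\beta}_k\times W_{k-1}^D$; $\widehat V_{k+1}=\boldsymbol{\mathcal{A}}*V_k-V_k\times\boldsymbol{\alpha}_k-V_{k-1}\times\boldsymbol{\gamma}_k$ (the term with $\boldsymbol{\gamma}_1$ vanishes since $V_0=0$); choose a nonsingular $\boldsymbol{\gamma}_{k+1}\in\mathbb{C}^{M\times M}$; $\boldsymbol{\beta}_{k+1}=\boldsymbol{\gamma}_{k+1}^{-1}(\widehat W_{k+1}^D*\widehat V_{k+1})$; if $\boldsymbol{\beta}_{k+1}$ is singular the process stops, otherwise $V_{k+1}=\widehat V_{k+1}\times\boldsymbol{\beta}_{k+1}^{-1}$ and $W_{k+1}^D=\boldsymbol{\gamma}_{k+1}^{-1}\times\widehat W_{k+1}^D$. Tridiagonal tensor $\boldsymbol{\mathcal{T}}_n\in\mathbb{C}^{n\times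 n\times M\times M}$: $(\boldsymbol{\mathcal{T}}_n)_{i,i,:,:}=\boldsymbol{\alpha}_i$ ($1\le i\le n$), $(\boldsymbol{\mathcal{T}}_n)_{i,i+1,:,:}=\boldsymbol{\gamma}_{i+1}$ ($1\le i\le n-1$), $(\boldsymbol{\mathcal{T}}_n)_{i,i-1,:,:}=\boldsymbol{\beta}_i$ ($2\le i\le n$), all other slices zero. *)

theory Defs
  imports "HOL-Analysis.Analysis"
begin

text \<open>Conventions: indices are 0-based. An M x M complex matrix is 'complex^'m^'m'
(M = CARD('m)). A 3-mode tensor (hypervector) of length N is a function
nat => matrix, only indices < N being relevant; a 4-mode tensor of size N x N x M x M
is a function nat => nat => matrix, only indices < N being relevant.
Left-acting tensors (superscript D) are represented the same way as hypervectors.\<close>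

type_synonym 'm cmat = "complex^'m^'m"
type_synonym 'm hvec = "nat \<Rightarrow> 'm cmat"
type_synonym 'm tens = "nat \<Rightarrow> nat \<Rightarrow> 'm cmat"

definition tprod :: "nat \<Rightarrow> 'm::finite tens \<Rightarrow> 'm tens \<Rightarrow> 'm tens" where
  "tprod N A B = (\<lambda>i j. \<Sum>k<N. A i k ** B k j)"

definition tvec :: "nat \<Rightarrow> 'm::finite tens \<Rightarrow> 'm hvec \<Rightarrow> 'm hvec" where
  "tvec N A X = (\<lambda>i. \<Sum>k<N. A i k ** X k)"

definition tlvec :: "nat \<Rightarrow> 'm::finite hvec \<Rightarrow> 'm tens \<Rightarrow> 'm hvec" where
  "tlvec N Y A = (\<lambda>i. \<Sum>k<N. Y k ** A k i)"

definition hip :: "nat \<Rightarrow> 'm::finite hvec \<Rightarrow> 'm hvec \<Rightarrow> 'm cmat" where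
  "hip N Y X = (\<Sum>k<N. Y k ** X k)"

definition tid :: "'m::finite tens" where
  "tid = (\<lambda>i j. if i = j then mat 1 else 0)"

primrec tpow :: "nat \<Rightarrow> 'm::finite tens \<Rightarrow> nat \<Rightarrow> 'm tens" where
  "tpow N A 0 = tid"
| "tpow N A (Suc k) = tprod N A (tpow N A k)"

definition kronI :: "(nat \<Rightarrow> complex) \<Rightarrow> 'm::finite hvec" where
  "kronI a = (\<lambda>i. mat (a i))"

text \<open>State of the Lanczos process after s steps, i.e. at index k = s+1:
  (V_{k-1}, V_k, W^D_{k-1}, W^D_k, beta_k).  Vectors v, w are 0-indexed functions;
  gam k is the chosen gamma_k (gam 1 is irrelevant since V_0 = 0).\<close>
fun lz_state :: "nat \<Rightarrow> 'm::finite tens \<Rightarrow> (nat \<Rightarrow> complex) \<Rightarrow> (nat \<Rightarrow> complex)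
     \<Rightarrow> (nat \<Rightarrow> 'm cmat) \<Rightarrow> nat \<Rightarrow> 'm hvec \<times> 'm hvec \<times> 'm hvec \<times> 'm hvec \<times> 'm cmat" where
  "lz_state N A v w gam 0 = (\<lambda>_. 0, kronI v, \<lambda>_. 0, kronI (\<lambda>i. cnj (w i)), 0)"
| "lz_state N A v w gam (Suc s) =
     (case lz_state N A v w gam s of (Vp, Vc, Wp, Wc, b) \<Rightarrow>
       let k = Suc s;
           a = hip N Wc (tvec N A Vc);
           hW = (\<lambda>i. tlvec N Wc A i - a ** Wc i - b ** Wp i);
           hV = (\<lambda>i. tvec N A Vc i - Vc i ** a - Vp i ** gam k);
           g = gam (Suc k);
           b' = matrix_inv g ** hip N hW hV
       in (Vc, (\<lambda>i. hV i ** matrix_inv b'), Wc, (\<lambda>i. matrix_inv g ** hW i), b'))"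

definition lzV where "lzV N A v w gam k = fst (snd (lz_state N A v w gam (k - 1)))"
definition lzW where "lzW N A v w gam k = fst (snd (snd (snd (lz_state N A v w gam (k - 1)))))"
definition lzbeta where "lzbeta N A v w gam k = snd (snd (snd (snd (lz_state N A v w gam (k - 1)))))"
definition lzalpha where
  "lzalpha N A v w gam k = hip N (lzW N A v w gam k) (tvec N A (lzV N A v w gam k))"

text \<open>Block tridiagonal tensor T_n (0-based: slice (i,j) is the paper's (i+1,j+1)).\<close>
definition lzT :: "nat \<Rightarrow> 'm::finite tens \<Rightarrow> (nat \<Rightarrow> complex) \<Rightarrow> (nat \<Rightarrow> complex)
     \<Rightarrow> (nat \<Rightarrow> 'm cmat) \<Rightarrow> nat \<Rightarrow> 'm tens" where
  "lzT N A v w gam n = (\<lambda>i j.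
     if i < n \<and> j < n then
       (if i = j then lzalpha N A v w gam (i + 1)
        else if j = i + 1 then gam (i + 2)
        else if i = j + 1 then lzbeta N A v w gam (i + 1)
        else 0)
     else 0)"

definition E1 :: "'m::finite hvec" where
  "E1 = (\<lambda>i. if i = 0 then mat 1 else 0)"

end

theory Submission
  imports Defs
begin

text \<open>The Lanczos hypervectors are biorthogonal, \<open>W\<^sub>i\<^sup>D * V\<^sub>j = \<delta>\<^sub>i\<^sub>j I\<close>, and the
  three-term recurrences say that \<open>A\<close> acts on a block combination \<open>\<Sum>\<^sub>l V\<^sub>l \<times> c\<^sub>l\<close> of
  \<open>V\<^sub>1, \<dots>, V\<^sub>n\<close> as \<open>T\<^sub>n\<close> acts on the coefficients \<open>c\<close>, up to a residual
  \<open>Vhat\<^sub>n\<^sub>+\<^sub>1 \<times> c\<^sub>n\<close> orthogonal to every \<open>W\<^sub>i\<^sup>D\<close>; symmetrically from the left.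
  As \<open>T\<^sub>n\<close> is tridiagonal, \<open>T\<^sub>n\<^sup>j * E\<^sub>1\<close> vanishes at index \<open>n\<close> for \<open>j < n - 1\<close>, so the
  residual never appears and \<open>A\<^sup>j * V = \<Sum>\<^sub>l V\<^sub>l \<times> (T\<^sub>n\<^sup>j * E\<^sub>1)\<^sub>l\<close> for \<open>j \<le> n - 1\<close>,
  and likewise from the left. Writing \<open>k = a + b\<close> with \<open>a, b \<le> n - 1\<close> and pairing,
  biorthogonality turns \<open>W\<^sup>D * A\<^sup>k * V\<close> into \<open>E\<^sub>1\<^sup>D * T\<^sub>n\<^sup>k * E\<^sub>1\<close>; for \<open>k = 2n - 1\<close> the one
  extra application of \<open>A\<close> adds only the residual, which pairs to zero.\<close>

lemma matrix_add_rdistrib: "((A::'a::semiring_1^'n^'m) + B) ** C = A ** C + B ** C"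
  by (simp add: matrix_matrix_mult_def vec_eq_iff sum.distrib[symmetric] distrib_right)

lemma matrix_diff_ldistrib: "(A::'a::ring_1^'n^'m) ** (B - C) = A ** B - A ** C"
  by (simp add: matrix_matrix_mult_def vec_eq_iff sum_subtractf[symmetric] right_diff_distrib)

lemma matrix_diff_rdistrib: "((A::'a::ring_1^'n^'m) - B) ** C = A ** C - B ** C"
  by (simp add: matrix_matrix_mult_def vec_eq_iff sum_subtractf[symmetric] left_diff_distrib)

lemma matrix_sum_ldistrib: "(A::'a::semiring_1^'n^'m) ** (\<Sum>k\<in>S. f k) = (\<Sum>k\<in>S. A ** f k)"
  by (induction S rule: infinite_finite_induct) (auto simp: matrix_add_ldistrib)

lemma matrix_sum_rdistrib: "(\<Sum>k\<in>S. f k) ** (A::'a::semiring_1^'n^'m) = (\<Sum>k\<in>S. f k ** A)"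
  by (induction S rule: infinite_finite_induct) (auto simp: matrix_add_rdistrib)

lemmas matrix_mult_distribs = matrix_add_ldistrib matrix_add_rdistrib matrix_diff_ldistrib
  matrix_diff_rdistrib matrix_sum_ldistrib matrix_sum_rdistrib

lemma matrix_inv_right: "invertible (A::'a::semiring_1^'n^'m) \<Longrightarrow> A ** matrix_inv A = mat 1"
  unfolding invertible_def matrix_inv_def by (rule someI2_ex) (assumption, blast)

lemma matrix_inv_left: "invertible (A::'a::semiring_1^'n^'m) \<Longrightarrow> matrix_inv A ** A = mat 1"
  unfolding invertible_def matrix_inv_def by (rule someI2_ex) (assumption, blast)

lemma sum_mat: "(\<Sum>k\<in>S. mat (f k)) = (mat (\<Sum>k\<in>S. f k) :: 'a::comm_semiring_1^'n^'n)"
  by (induction S rule: infinite_finite_induct) (auto simp: mat_def vec_eq_iff)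

lemma mat_mult_mat: "mat a ** mat b = (mat (a * b) :: 'a::comm_semiring_1^'n^'n)"
proof -
  have "(\<Sum>k\<in>UNIV. (if i = k then a else 0) * (if k = j then b else 0)) = (if i = j then a * b else 0)"
    for i j :: 'n
  proof -
    have "(\<Sum>k\<in>UNIV. (if i = k then a else 0) * (if k = j then b else 0))
        = (\<Sum>k\<in>UNIV. if k = i then a * (if k = j then b else 0) else 0)"
      by (rule sum.cong) auto
    then show ?thesis by (simp add: sum.delta')
  qed
  then show ?thesis by (simp add: vec_eq_iff matrix_matrix_mult_def mat_def)
qed

lemma sum_lessThan_Suc_if_less: "(\<Sum>p<Suc k. if p < k then f p else 0) = (\<Sum>p<k. f p)"
  by (simp add: sum.lessThan_Suc)

lemma sum_lessThan_Suc_if_pos: "(\<Sum>p<Suc k. if 1 \<le> p then f p else 0) = (\<Sum>q<k. f (Suc q))"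
  by (subst sum.lessThan_Suc_shift) simp

lemma hip_tvec: "hip N Y (tvec N A X) = hip N (tlvec N Y A) X"
  unfolding hip_def tvec_def tlvec_def by (simp add: matrix_mult_distribs matrix_mul_assoc) (rule sum.swap)

lemma tvec_tprod: "tvec N (tprod N A B) X = tvec N A (tvec N B X)"
  unfolding tprod_def tvec_def by (simp add: matrix_mult_distribs matrix_mul_assoc) (rule ext, rule sum.swap)

lemma tvec_tid: "i < N \<Longrightarrow> tvec N tid X i = X i"
  unfolding tvec_def tid_def by (simp add: if_distrib if_distribR sum.delta cong: if_cong)

lemma tvec_cong: "(\<And>i. i < N \<Longrightarrow> X i = X' i) \<Longrightarrow> tvec N A X = tvec N A X'"
  unfolding tvec_def by (auto intro!: ext sum.cong)

lemma hip_cong: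
  "(\<And>i. i < N \<Longrightarrow> Y i = Y' i) \<Longrightarrow> (\<And>i. i < N \<Longrightarrow> X i = X' i) \<Longrightarrow> hip N Y X = hip N Y' X'"
  unfolding hip_def by (auto intro!: sum.cong)

lemma hip_zero_left [simp]: "hip N (\<lambda>_. 0) X = 0"
  by (simp add: hip_def)

lemma hip_zero_right [simp]: "hip N Y (\<lambda>_. 0) = 0"
  by (simp add: hip_def)

lemma hip_mult_left: "hip N (\<lambda>i. a ** Y i) X = a ** hip N Y X"
  by (simp add: hip_def matrix_mult_distribs matrix_mul_assoc)

lemma hip_mult_right: "hip N Y (\<lambda>i. X i ** b) = hip N Y X ** b"
  by (simp add: hip_def matrix_mult_distribs matrix_mul_assoc)

lemma hip_add_left: "hip N (\<lambda>i. Y i + Z i) X = hip N Y X + hip N Z X"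
  by (simp add: hip_def matrix_mult_distribs sum.distrib)

lemma hip_add_right: "hip N Y (\<lambda>i. X i + Z i) = hip N Y X + hip N Y Z"
  by (simp add: hip_def matrix_mult_distribs sum.distrib)

lemma hip_diff_left: "hip N (\<lambda>i. Y i - Z i) X = hip N Y X - hip N Z X"
  by (simp add: hip_def matrix_mult_distribs sum_subtractf)

lemma hip_diff_right: "hip N Y (\<lambda>i. X i - Z i) = hip N Y X - hip N Y Z"
  by (simp add: hip_def matrix_mult_distribs sum_subtractf)

lemma hip_sum_left: "hip N (\<lambda>i. \<Sum>l\<in>S. d l ** Y l i) X = (\<Sum>l\<in>S. d l ** hip N (Y l) X)"
  unfolding hip_def by (simp add: matrix_mult_distribs matrix_mul_assoc) (rule sum.swap)

lemma hip_sum_sum: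
  "hip N (\<lambda>i. \<Sum>l\<in>S. d l ** Y l i) (\<lambda>i. \<Sum>p\<in>R. X p i ** c p)
   = (\<Sum>l\<in>S. \<Sum>p\<in>R. d l ** hip N (Y l) (X p) ** c p)"
  unfolding hip_sum_left hip_def
  by (simp add: matrix_mult_distribs matrix_mul_assoc) (rule sum.cong[OF refl], rule sum.swap)

lemma tvec_sum: "tvec N B (\<lambda>i. \<Sum>l\<in>S. X l i ** c l) = (\<lambda>i. \<Sum>l\<in>S. tvec N B (X l) i ** c l)"
  unfolding tvec_def by (simp add: matrix_mult_distribs matrix_mul_assoc) (rule ext, rule sum.swap)

lemma tlvec_sum: "tlvec N (\<lambda>i. \<Sum>l\<in>S. d l ** Y l i) B = (\<lambda>i. \<Sum>l\<in>S. d l ** tlvec N (Y l) B i)"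
  unfolding tlvec_def by (simp add: matrix_mult_distribs matrix_mul_assoc) (rule ext, rule sum.swap)

lemma tvec_tpow: "i < N \<Longrightarrow> tvec N (tpow N A k) X i = (tvec N A ^^ k) X i"
proof (induction k arbitrary: i)
  case 0
  then show ?case by (simp add: tvec_tid)
next
  case (Suc k)
  have "tvec N (tpow N A (Suc k)) X = tvec N A (tvec N (tpow N A k) X)"
    by (simp add: tvec_tprod)
  also have "\<dots> = tvec N A ((tvec N A ^^ k) X)"
    by (rule tvec_cong) (simp add: Suc.IH)
  finally show ?case by simp
qed

lemma hip_tvec_tpow: "hip N Y (tvec N (tpow N A k) X) = hip N Y ((tvec N A ^^ k) X)"
  by (rule hip_cong) (auto simp: tvec_tpow)

lemma hip_funpow_tvec_add:
  "hip N Y ((tvec N A ^^ (a + b)) X) = hip N (((\<lambda>Y. tlvec N Y A) ^^ a) Y) ((tvec N A ^^ b) X)"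
proof (induction a arbitrary: Y)
  case 0
  then show ?case by simp
next
  case (Suc a)
  have "hip N Y ((tvec N A ^^ (Suc a + b)) X) = hip N (tlvec N Y A) ((tvec N A ^^ (a + b)) X)"
    by (simp add: hip_tvec)
  also have "\<dots> = hip N (((\<lambda>Y. tlvec N Y A) ^^ a) (tlvec N Y A)) ((tvec N A ^^ b) X)"
    by (rule Suc.IH)
  finally show ?case by (simp add: funpow_Suc_right del: funpow.simps)
qed

lemma funpow_tvec_E1_eq_0:
  assumes "\<And>p q. Suc q < p \<Longrightarrow> B p q = 0" and "j < q"
  shows "(tvec n B ^^ j) E1 q = 0"
  using assms(2)
proof (induction j arbitrary: q)
  case 0
  then show ?case by (simp add: E1_def)
next
  case (Suc j)
  have "B q k ** (tvec n B ^^ j) E1 k = 0" for k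
    using Suc assms(1)[of k q] by (cases "q \<le> Suc k") auto
  then show ?case by (simp add: tvec_def[of n B "(tvec n B ^^ j) E1"])
qed

lemma funpow_tlvec_E1_eq_0:
  assumes "\<And>p q. Suc p < q \<Longrightarrow> B p q = 0" and "j < q"
  shows "((\<lambda>Y. tlvec n Y B) ^^ j) E1 q = 0"
  using assms(2)
proof (induction j arbitrary: q)
  case 0
  then show ?case by (simp add: E1_def)
next
  case (Suc j)
  have "((\<lambda>Y. tlvec n Y B) ^^ j) E1 p ** B p q = 0" for p
    using Suc assms(1)[of p q] by (cases "q \<le> Suc p") auto
  then show ?case by (simp add: tlvec_def[of n "((\<lambda>Y. tlvec n Y B) ^^ j) E1"])
qed

lemma lzT_eq_0:
  "Suc q < p \<Longrightarrow> lzT N A v w gam n p q = 0" "Suc p < q \<Longrightarrow> lzT N A v w gam n p q = 0"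
  by (auto simp: lzT_def)

locale lanczos_process =
  fixes N :: nat and A :: "'m::finite tens" and v w :: "nat \<Rightarrow> complex"
    and gam :: "nat \<Rightarrow> 'm cmat" and m :: nat
  assumes wv: "(\<Sum>i<N. cnj (w i) * v i) = 1"
    and gam_inv: "\<forall>k\<ge>2. invertible (gam k)"
    and beta_inv: "\<forall>j. 2 \<le> j \<and> j \<le> Suc m \<longrightarrow> invertible (lzbeta N A v w gam j)"
begin

text \<open>\<open>lzV N A v w gam 0\<close> is \<open>V\<^sub>1\<close> again (truncated subtraction), so the paper's
  \<open>V\<^sub>0 = W\<^sup>D\<^sub>0 = 0\<close> are put in explicitly.\<close>

definition V :: "nat \<Rightarrow> 'm hvec" where
  "V j = (if j = 0 then (\<lambda>_. 0) else lzV N A v w gam j)"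

definition W :: "nat \<Rightarrow> 'm hvec" where
  "W j = (if j = 0 then (\<lambda>_. 0) else lzW N A v w gam j)"

definition alpha :: "nat \<Rightarrow> 'm cmat" where
  "alpha j = lzalpha N A v w gam j"

definition beta :: "nat \<Rightarrow> 'm cmat" where
  "beta j = lzbeta N A v w gam j"

definition Vhat :: "nat \<Rightarrow> 'm hvec" where
  "Vhat j = (\<lambda>i. tvec N A (V j) i - V j i ** alpha j - V (j - 1) i ** gam j)"

definition What :: "nat \<Rightarrow> 'm hvec" where
  "What j = (\<lambda>i. tlvec N (W j) A i - alpha j ** W j i - beta j ** W (j - 1) i)"

lemma V_0: "V 0 = (\<lambda>_. 0)"
  by (simp add: V_def)

lemma W_0: "W 0 = (\<lambda>_. 0)"
  by (simp add: W_def)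

lemma V_1: "V 1 = kronI v"
  by (simp add: V_def lzV_def)

lemma W_1: "W 1 = kronI (\<lambda>i. cnj (w i))"
  by (simp add: W_def lzW_def)

lemma alpha_eq: "1 \<le> j \<Longrightarrow> alpha j = hip N (W j) (tvec N A (V j))"
  by (simp add: alpha_def lzalpha_def V_def W_def)

lemma lz_state_eq: "lz_state N A v w gam s = (V s, V (Suc s), W s, W (Suc s), beta (Suc s))"
proof -
  have "fst (lz_state N A v w gam s) = V s \<and> fst (snd (snd (lz_state N A v w gam s))) = W s"
  proof (cases s)
    case 0
    then show ?thesis by (simp add: V_def W_def)
  next
    case (Suc s')
    then show ?thesis
      by (cases "lz_state N A v w gam s'") (simp add: V_def W_def lzV_def lzW_def Let_def)
  qed
  then show ?thesis
    by (simp add: V_def W_def beta_def lzV_def lzW_def lzbeta_def prod_eq_iff)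
qed

lemma lanczos_recurrence:
  assumes "1 \<le> j"
  shows "V (Suc j) = (\<lambda>i. Vhat j i ** matrix_inv (beta (Suc j)))"
    and "W (Suc j) = (\<lambda>i. matrix_inv (gam (Suc j)) ** What j i)"
    and "beta (Suc j) = matrix_inv (gam (Suc j)) ** hip N (What j) (Vhat j)"
proof -
  obtain s where s: "j = Suc s"
    using assms by (cases j) auto
  have "lz_state N A v w gam j =
      (V j, (\<lambda>i. Vhat j i ** matrix_inv (matrix_inv (gam (Suc j)) ** hip N (What j) (Vhat j))),
       W j, (\<lambda>i. matrix_inv (gam (Suc j)) ** What j i), matrix_inv (gam (Suc j)) ** hip N (What j) (Vhat j))"
    unfolding s using lz_state_eq[of s] alpha_eq[of "Suc s"] by (simp add: Let_def Vhat_def What_def)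
  then show "V (Suc j) = (\<lambda>i. Vhat j i ** matrix_inv (beta (Suc j)))"
    and "W (Suc j) = (\<lambda>i. matrix_inv (gam (Suc j)) ** What j i)"
    and "beta (Suc j) = matrix_inv (gam (Suc j)) ** hip N (What j) (Vhat j)"
    using lz_state_eq[of j] by auto
qed

lemma tvec_V: "tvec N A (V j) = (\<lambda>i. Vhat j i + V j i ** alpha j + V (j - 1) i ** gam j)"
  by (simp add: Vhat_def)

lemma tlvec_W: "tlvec N (W j) A = (\<lambda>i. What j i + alpha j ** W j i + beta j ** W (j - 1) i)"
  by (simp add: What_def)

lemma Vhat_eq:
  assumes "1 \<le> j" and "j \<le> m"
  shows "Vhat j = (\<lambda>i. V (Suc j) i ** beta (Suc j))"
proof -
  have "invertible (beta (Suc j))"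
    using beta_inv assms by (simp add: beta_def)
  then show ?thesis
    using lanczos_recurrence(1)[OF assms(1)] by (simp add: matrix_inv_left flip: matrix_mul_assoc)
qed

lemma What_eq:
  assumes "1 \<le> j"
  shows "What j = (\<lambda>i. gam (Suc j) ** W (Suc j) i)"
proof -
  have "invertible (gam (Suc j))"
    using gam_inv assms by simp
  then show ?thesis
    using lanczos_recurrence(2)[OF assms] by (simp add: matrix_inv_right matrix_mul_assoc)
qed

lemma hip_What_Vhat:
  assumes "1 \<le> j"
  shows "hip N (What j) (Vhat j) = gam (Suc j) ** beta (Suc j)"
proof -
  have "invertible (gam (Suc j))"
    using gam_inv assms by simp
  then show ?thesis
    using lanczos_recurrence(3)[OF assms] by (simp add: matrix_inv_right matrix_mul_assoc)
qed

definition biorthogonal :: "nat \<Rightarrow> bool" where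
  "biorthogonal k \<longleftrightarrow> (\<forall>i\<le>k. \<forall>j\<le>k. hip N (W i) (V j) = (if i = j \<and> 1 \<le> i then mat 1 else 0))"

lemma biorthogonal_1: "biorthogonal 1"
proof -
  have "hip N (W 1) (V 1) = mat 1"
    using wv unfolding W_1 V_1 hip_def kronI_def by (simp add: mat_mult_mat sum_mat)
  then show ?thesis
    unfolding biorthogonal_def by (auto simp: le_Suc_eq V_0 W_0)
qed

lemma hip_W_Vhat_eq_0:
  assumes orth: "biorthogonal k" and k: "1 \<le> k" "k \<le> Suc m" and i: "i \<le> k"
  shows "hip N (W i) (Vhat k) = 0"
proof -
  have ort: "\<And>a b. a \<le> k \<Longrightarrow> b \<le> k \<Longrightarrow> hip N (W a) (V b) = (if a = b \<and> 1 \<le> a then mat 1 else 0)"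
    using orth unfolding biorthogonal_def by blast
  have Vhat: "hip N (W i) (Vhat k) = hip N (W i) (tvec N A (V k)) - hip N (W i) (V k) ** alpha k
      - hip N (W i) (V (k - 1)) ** gam k"
    unfolding Vhat_def by (simp add: hip_diff_right hip_mult_right)
  consider "i = 0" | "i = k" | "1 \<le> i" "i < k"
    using i by linarith
  then show ?thesis
  proof cases
    case 1
    then show ?thesis using Vhat by (simp add: W_0)
  next
    case 2
    then show ?thesis using Vhat k ort[of k k] ort[of k "k - 1"] by (simp add: alpha_eq)
  next
    case 3
    have "hip N (W i) (tvec N A (V k)) = gam (Suc i) ** hip N (W (Suc i)) (V k)
        + alpha i ** hip N (W i) (V k) + beta i ** hip N (W (i - 1)) (V k)"
      unfolding hip_tvec tlvec_W What_eq[OF 3(1)] by (simp add: hip_add_left hip_mult_left)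
    then show ?thesis using Vhat 3 ort[of "Suc i" k] ort[of i k] ort[of "i - 1" k] ort[of i "k - 1"]
      by (cases "Suc i = k") auto
  qed
qed

lemma hip_What_V_eq_0:
  assumes orth: "biorthogonal k" and k: "1 \<le> k" "k \<le> Suc m" and j: "j \<le> k"
  shows "hip N (What k) (V j) = 0"
proof -
  have ort: "\<And>a b. a \<le> k \<Longrightarrow> b \<le> k \<Longrightarrow> hip N (W a) (V b) = (if a = b \<and> 1 \<le> a then mat 1 else 0)"
    using orth unfolding biorthogonal_def by blast
  have What: "hip N (What k) (V j) = hip N (W k) (tvec N A (V j)) - alpha k ** hip N (W k) (V j)
      - beta k ** hip N (W (k - 1)) (V j)"
    unfolding What_def by (simp add: hip_diff_left hip_mult_left hip_tvec)
  consider "j = 0" | "j = k" | "1 \<le> j" "j < k"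
    using j by linarith
  then show ?thesis
  proof cases
    case 1
    then show ?thesis using What by (simp add: V_0 tvec_def)
  next
    case 2
    have "k - 1 \<noteq> k"
      using k by simp
    then show ?thesis using What 2 k ort[of k k] ort[of "k - 1" k] by (simp add: alpha_eq hip_tvec)
  next
    case 3
    have jm: "j \<le> m"
      using 3 k by linarith
    have "hip N (W k) (tvec N A (V j)) = hip N (W k) (V (Suc j)) ** beta (Suc j)
        + hip N (W k) (V j) ** alpha j + hip N (W k) (V (j - 1)) ** gam j"
      unfolding tvec_V Vhat_eq[OF 3(1) jm] by (simp add: hip_add_right hip_mult_right)
    then show ?thesis using What 3 ort[of k "Suc j"] ort[of k j] ort[of k "j - 1"] ort[of "k - 1" j]
      by (cases "Suc j = k") auto
  qed
qed

lemma biorthogonal_Suc: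
  assumes orth: "biorthogonal k" and k: "1 \<le> k" "k \<le> m"
  shows "biorthogonal (Suc k)"
proof -
  have new_column: "hip N (W i) (V (Suc k)) = 0" if "i \<le> k" for i
    using hip_W_Vhat_eq_0[OF orth k(1) _ that] k
    by (simp add: lanczos_recurrence(1)[OF k(1)] hip_mult_right)
  have new_row: "hip N (W (Suc k)) (V j) = 0" if "j \<le> k" for j
    using hip_What_V_eq_0[OF orth k(1) _ that] k
    by (simp add: lanczos_recurrence(2)[OF k(1)] hip_mult_left)
  have "invertible (beta (Suc k))" "invertible (gam (Suc k))"
    using beta_inv gam_inv k by (simp_all add: beta_def)
  then have diagonal: "hip N (W (Suc k)) (V (Suc k)) = mat 1"
    unfolding lanczos_recurrence(1,2)[OF k(1)]
    by (simp add: hip_mult_left hip_mult_right hip_What_Vhat[OF k(1)] matrix_mul_assoc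
        matrix_inv_left matrix_inv_right flip: matrix_mul_assoc)
  show ?thesis
    using orth new_column new_row diagonal unfolding biorthogonal_def by (auto simp: le_Suc_eq)
qed

lemma biorthogonal_Suc_m: "biorthogonal (Suc m)"
proof -
  have "biorthogonal (Suc k)" if "k \<le> m" for k
    using that
  proof (induction k)
    case 0
    then show ?case using biorthogonal_1 by simp
  next
    case (Suc k)
    then show ?case using biorthogonal_Suc by simp
  qed
  then show ?thesis by simp
qed

abbreviation T :: "'m tens" where
  "T \<equiv> lzT N A v w gam (Suc m)"

lemma lzT_row_sum:
  assumes "p \<le> m"
  shows "(\<Sum>q<Suc m. T p q ** c q) = alpha (Suc p) ** c p
     + (if p < m then gam (Suc (Suc p)) ** c (Suc p) else 0)
     + (if 1 \<le> p then beta (Suc p) ** c (p - 1) else 0)"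
proof -
  have "T p q ** c q = (if q = p then alpha (Suc p) ** c q else 0)
     + (if q = Suc p then gam (Suc (Suc p)) ** c q else 0)
     + (if Suc q = p then beta (Suc p) ** c q else 0)" if "q < Suc m" for q
    using assms that by (auto simp: lzT_def alpha_def beta_def)
  then have "(\<Sum>q<Suc m. T p q ** c q) = (\<Sum>q<Suc m. if q = p then alpha (Suc p) ** c q else 0)
     + (\<Sum>q<Suc m. if q = Suc p then gam (Suc (Suc p)) ** c q else 0)
     + (\<Sum>q<Suc m. if Suc q = p then beta (Suc p) ** c q else 0)"
    by (simp add: sum.distrib)
  moreover have "(\<Sum>q<Suc m. if Suc q = p then beta (Suc p) ** c q else 0)
      = (if 1 \<le> p then beta (Suc p) ** c (p - 1) else 0)"
    using assms by (cases p) (auto simp: sum.delta)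
  ultimately show ?thesis
    using assms by (auto simp: sum.delta less_Suc_eq)
qed

lemma lzT_col_sum:
  assumes "q \<le> m"
  shows "(\<Sum>p<Suc m. d p ** T p q) = d q ** alpha (Suc q)
     + (if 1 \<le> q then d (q - 1) ** gam (Suc q) else 0)
     + (if q < m then d (Suc q) ** beta (Suc (Suc q)) else 0)"
proof -
  have "d p ** T p q = (if p = q then d p ** alpha (Suc q) else 0)
     + (if Suc p = q then d p ** gam (Suc q) else 0)
     + (if p = Suc q then d p ** beta (Suc (Suc q)) else 0)" if "p < Suc m" for p
    using assms that by (auto simp: lzT_def alpha_def beta_def)
  then have "(\<Sum>p<Suc m. d p ** T p q) = (\<Sum>p<Suc m. if p = q then d p ** alpha (Suc q) else 0)
     + (\<Sum>p<Suc m. if Suc p = q then d p ** gam (Suc q) else 0)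
     + (\<Sum>p<Suc m. if p = Suc q then d p ** beta (Suc (Suc q)) else 0)"
    by (simp add: sum.distrib)
  moreover have "(\<Sum>p<Suc m. if Suc p = q then d p ** gam (Suc q) else 0)
      = (if 1 \<le> q then d (q - 1) ** gam (Suc q) else 0)"
    using assms by (cases q) (auto simp: sum.delta)
  ultimately show ?thesis
    using assms by (auto simp: sum.delta less_Suc_eq)
qed

definition Vcomb :: "'m hvec \<Rightarrow> 'm hvec" where
  "Vcomb c = (\<lambda>i. \<Sum>l<Suc m. V (Suc l) i ** c l)"

definition Wcomb :: "'m hvec \<Rightarrow> 'm hvec" where
  "Wcomb d = (\<lambda>i. \<Sum>l<Suc m. d l ** W (Suc l) i)"

lemma tvec_Vcomb: "tvec N A (Vcomb c) = (\<lambda>i. Vcomb (tvec (Suc m) T c) i + Vhat (Suc m) i ** c m)"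
proof
  fix i
  have "tvec N A (Vcomb c) i = (\<Sum>l<Suc m. tvec N A (V (Suc l)) i ** c l)"
    unfolding Vcomb_def tvec_sum by simp
  also have "\<dots> = (\<Sum>l<Suc m. Vhat (Suc l) i ** c l) + (\<Sum>l<Suc m. V (Suc l) i ** alpha (Suc l) ** c l)
      + (\<Sum>l<Suc m. V l i ** gam (Suc l) ** c l)"
    unfolding tvec_V by (simp add: matrix_add_rdistrib sum.distrib)
  also have "(\<Sum>l<Suc m. Vhat (Suc l) i ** c l)
      = (\<Sum>l<m. V (Suc (Suc l)) i ** beta (Suc (Suc l)) ** c l) + Vhat (Suc m) i ** c m"
    by (simp add: sum.lessThan_Suc Vhat_eq)
  also have "(\<Sum>l<Suc m. V l i ** gam (Suc l) ** c l) = (\<Sum>l<m. V (Suc l) i ** gam (Suc (Suc l)) ** c (Suc l))"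
    by (subst sum.lessThan_Suc_shift) (simp add: V_0)
  finally have lhs: "tvec N A (Vcomb c) i
      = (\<Sum>l<m. V (Suc (Suc l)) i ** beta (Suc (Suc l)) ** c l) + Vhat (Suc m) i ** c m
      + (\<Sum>l<Suc m. V (Suc l) i ** alpha (Suc l) ** c l)
      + (\<Sum>l<m. V (Suc l) i ** gam (Suc (Suc l)) ** c (Suc l))" .
  have "Vcomb (tvec (Suc m) T c) i = (\<Sum>p<Suc m. V (Suc p) i ** (\<Sum>q<Suc m. T p q ** c q))"
    unfolding Vcomb_def tvec_def by simp
  also have "\<dots> = (\<Sum>p<Suc m. V (Suc p) i ** (alpha (Suc p) ** c p
      + (if p < m then gam (Suc (Suc p)) ** c (Suc p) else 0)
      + (if 1 \<le> p then beta (Suc p) ** c (p - 1) else 0)))"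
    by (rule sum.cong[OF refl], subst lzT_row_sum) auto
  also have "\<dots> = (\<Sum>p<Suc m. V (Suc p) i ** alpha (Suc p) ** c p)
      + (\<Sum>p<Suc m. if p < m then V (Suc p) i ** gam (Suc (Suc p)) ** c (Suc p) else 0)
      + (\<Sum>p<Suc m. if 1 \<le> p then V (Suc p) i ** beta (Suc p) ** c (p - 1) else 0)"
    by (simp add: matrix_add_ldistrib sum.distrib matrix_mul_assoc if_distrib[of "(**) (V _ i)"]
        cong: if_cong)
  also have "\<dots> = (\<Sum>p<Suc m. V (Suc p) i ** alpha (Suc p) ** c p)
      + (\<Sum>p<m. V (Suc p) i ** gam (Suc (Suc p)) ** c (Suc p))
      + (\<Sum>q<m. V (Suc (Suc q)) i ** beta (Suc (Suc q)) ** c q)"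
    by (simp only: sum_lessThan_Suc_if_less sum_lessThan_Suc_if_pos) simp
  finally show "tvec N A (Vcomb c) i = Vcomb (tvec (Suc m) T c) i + Vhat (Suc m) i ** c m"
    using lhs by (simp add: algebra_simps)
qed

lemma tlvec_Wcomb: "tlvec N (Wcomb d) A = (\<lambda>i. Wcomb (tlvec (Suc m) d T) i + d m ** What (Suc m) i)"
proof
  fix i
  have "tlvec N (Wcomb d) A i = (\<Sum>l<Suc m. d l ** tlvec N (W (Suc l)) A i)"
    unfolding Wcomb_def tlvec_sum by simp
  also have "\<dots> = (\<Sum>l<Suc m. d l ** What (Suc l) i) + (\<Sum>l<Suc m. d l ** alpha (Suc l) ** W (Suc l) i)
      + (\<Sum>l<Suc m. d l ** beta (Suc l) ** W l i)"
    unfolding tlvec_W by (simp add: matrix_add_ldistrib sum.distrib matrix_mul_assoc)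
  also have "(\<Sum>l<Suc m. d l ** What (Suc l) i)
      = (\<Sum>l<m. d l ** gam (Suc (Suc l)) ** W (Suc (Suc l)) i) + d m ** What (Suc m) i"
    by (simp add: sum.lessThan_Suc What_eq matrix_mul_assoc del: What_eq[of "Suc m"])
  also have "(\<Sum>l<Suc m. d l ** beta (Suc l) ** W l i) = (\<Sum>q<m. d (Suc q) ** beta (Suc (Suc q)) ** W (Suc q) i)"
    by (subst sum.lessThan_Suc_shift) (simp add: W_0)
  finally have lhs: "tlvec N (Wcomb d) A i
      = (\<Sum>l<m. d l ** gam (Suc (Suc l)) ** W (Suc (Suc l)) i) + d m ** What (Suc m) i
      + (\<Sum>l<Suc m. d l ** alpha (Suc l) ** W (Suc l) i)
      + (\<Sum>q<m. d (Suc q) ** beta (Suc (Suc q)) ** W (Suc q) i)" .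
  have "Wcomb (tlvec (Suc m) d T) i = (\<Sum>q<Suc m. (\<Sum>p<Suc m. d p ** T p q) ** W (Suc q) i)"
    unfolding Wcomb_def tlvec_def by simp
  also have "\<dots> = (\<Sum>q<Suc m. (d q ** alpha (Suc q)
      + (if 1 \<le> q then d (q - 1) ** gam (Suc q) else 0)
      + (if q < m then d (Suc q) ** beta (Suc (Suc q)) else 0)) ** W (Suc q) i)"
    by (rule sum.cong[OF refl], subst lzT_col_sum) auto
  also have "\<dots> = (\<Sum>q<Suc m. d q ** alpha (Suc q) ** W (Suc q) i)
      + (\<Sum>q<Suc m. if 1 \<le> q then d (q - 1) ** gam (Suc q) ** W (Suc q) i else 0)
      + (\<Sum>q<Suc m. if q < m then d (Suc q) ** beta (Suc (Suc q)) ** W (Suc q) i else 0)"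
    by (simp add: matrix_add_rdistrib sum.distrib if_distrib[of "\<lambda>x. x ** W _ i"] cong: if_cong)
  also have "\<dots> = (\<Sum>q<Suc m. d q ** alpha (Suc q) ** W (Suc q) i)
      + (\<Sum>l<m. d l ** gam (Suc (Suc l)) ** W (Suc (Suc l)) i)
      + (\<Sum>q<m. d (Suc q) ** beta (Suc (Suc q)) ** W (Suc q) i)"
    by (simp only: sum_lessThan_Suc_if_less sum_lessThan_Suc_if_pos) simp
  finally show "tlvec N (Wcomb d) A i = Wcomb (tlvec (Suc m) d T) i + d m ** What (Suc m) i"
    using lhs by (simp add: algebra_simps)
qed

lemma hip_Wcomb_Vcomb: "hip N (Wcomb d) (Vcomb c) = hip (Suc m) d c"
proof -
  have "hip N (Wcomb d) (Vcomb c) = (\<Sum>l<Suc m. \<Sum>p<Suc m. d l ** hip N (W (Suc l)) (V (Suc p)) ** c p)"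
    unfolding Wcomb_def Vcomb_def by (rule hip_sum_sum)
  also have "\<dots> = (\<Sum>l<Suc m. \<Sum>p<Suc m. if p = l then d l ** c p else 0)"
    using biorthogonal_Suc_m unfolding biorthogonal_def by (intro sum.cong refl) auto
  also have "\<dots> = hip (Suc m) d c"
    by (simp add: hip_def sum.delta)
  finally show ?thesis .
qed

lemma hip_Wcomb_tvec_Vcomb: "hip N (Wcomb d) (tvec N A (Vcomb c)) = hip (Suc m) d (tvec (Suc m) T c)"
proof -
  have "hip N (Wcomb d) (Vhat (Suc m)) = 0"
    unfolding Wcomb_def hip_sum_left using hip_W_Vhat_eq_0[OF biorthogonal_Suc_m] by simp
  then show ?thesis
    unfolding tvec_Vcomb by (simp add: hip_add_right hip_mult_right hip_Wcomb_Vcomb)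
qed

lemma funpow_tvec_V_1: "j \<le> m \<Longrightarrow> (tvec N A ^^ j) (V 1) = Vcomb ((tvec (Suc m) T ^^ j) E1)"
proof (induction j)
  case 0
  have "Vcomb E1 = V 1"
    by (rule ext) (simp add: Vcomb_def E1_def if_distrib[of "(**) (V _ _)"] sum.delta cong: if_cong)
  then show ?case by simp
next
  case (Suc j)
  have "(tvec (Suc m) T ^^ j) E1 m = 0"
    using Suc.prems by (intro funpow_tvec_E1_eq_0 lzT_eq_0) simp_all
  then show ?case
    using Suc by (simp add: tvec_Vcomb)
qed

lemma funpow_tlvec_W_1:
  "j \<le> m \<Longrightarrow> ((\<lambda>Y. tlvec N Y A) ^^ j) (W 1) = Wcomb (((\<lambda>Y. tlvec (Suc m) Y T) ^^ j) E1)"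
proof (induction j)
  case 0
  have "Wcomb E1 = W 1"
    by (rule ext) (simp add: Wcomb_def E1_def if_distrib[of "\<lambda>x. x ** W _ _"] sum.delta cong: if_cong)
  then show ?case by simp
next
  case (Suc j)
  have "((\<lambda>Y. tlvec (Suc m) Y T) ^^ j) E1 m = 0"
    using Suc.prems by (intro funpow_tlvec_E1_eq_0 lzT_eq_0) simp_all
  then show ?case
    using Suc by (simp add: tlvec_Wcomb)
qed

lemma moment_matching:
  assumes "k < 2 * Suc m"
  shows "hip N (W 1) ((tvec N A ^^ k) (V 1)) = hip (Suc m) E1 ((tvec (Suc m) T ^^ k) E1)"
proof (cases "k \<le> 2 * m")
  case True
  obtain a b where k: "k = a + b" and a: "a \<le> m" and b: "b \<le> m"
    using True by (intro that[of "k - min k m" "min k m"]) auto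
  have "hip N (W 1) ((tvec N A ^^ (a + b)) (V 1))
      = hip (Suc m) (((\<lambda>Y. tlvec (Suc m) Y T) ^^ a) E1) ((tvec (Suc m) T ^^ b) E1)"
    by (simp only: hip_funpow_tvec_add funpow_tvec_V_1[OF b] funpow_tlvec_W_1[OF a] hip_Wcomb_Vcomb)
  then show ?thesis
    unfolding k hip_funpow_tvec_add .
next
  case False
  then have k: "k = m + Suc m"
    using assms by simp
  have "hip N (W 1) ((tvec N A ^^ k) (V 1))
      = hip N (((\<lambda>Y. tlvec N Y A) ^^ m) (W 1)) (tvec N A ((tvec N A ^^ m) (V 1)))"
    unfolding k hip_funpow_tvec_add by simp
  also have "\<dots> = hip (Suc m) (((\<lambda>Y. tlvec (Suc m) Y T) ^^ m) E1) (tvec (Suc m) T ((tvec (Suc m) T ^^ m) E1))"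
    by (simp only: funpow_tvec_V_1[OF order_refl] funpow_tlvec_W_1[OF order_refl] hip_Wcomb_tvec_Vcomb)
  also have "\<dots> = hip (Suc m) E1 ((tvec (Suc m) T ^^ k) E1)"
    unfolding k hip_funpow_tvec_add by simp
  finally show ?thesis .
qed

end

theorem theorem3p2:
  fixes N n :: nat and A :: "'m::finite tens" and v w :: "nat \<Rightarrow> complex"
    and gam :: "nat \<Rightarrow> 'm cmat"
  assumes wv: "(\<Sum>i<N. cnj (w i) * v i) = 1"
    and gam_inv: "\<forall>k\<ge>2. invertible (gam k)"
    and n1: "n \<ge> 1"
    and beta_inv: "\<forall>j. 2 \<le> j \<and> j \<le> n \<longrightarrow> invertible (lzbeta N A v w gam j)"
  shows "\<forall>k < 2 * n.
    hip N (kronI (\<lambda>i. cnj (w i))) (tvec N (tpow N A k) (kronI v))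
    = hip n E1 (tvec n (tpow n (lzT N A v w gam n) k) E1)"
proof -
  obtain m where n: "n = Suc m"
    using n1 by (cases n) auto
  interpret lanczos_process N A v w gam m
    using wv gam_inv beta_inv n by unfold_locales auto
  show ?thesis
  proof (intro allI impI)
    fix k
    assume "k < 2 * n"
    then have "hip N (W 1) ((tvec N A ^^ k) (V 1)) = hip n E1 ((tvec n (lzT N A v w gam n) ^^ k) E1)"
      using moment_matching n by simp
    then show "hip N (kronI (\<lambda>i. cnj (w i))) (tvec N (tpow N A k) (kronI v))
        = hip n E1 (tvec n (tpow n (lzT N A v w gam n) k) E1)"
      by (simp only: hip_tvec_tpow V_1 W_1)
  qed
qed

end
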